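(* Let $E$ be a graph satisfying Condition (K). Let $v\in E^0$ support at least two distinct return paths. Then the Cuntz Splice $E_C^v$ satisfies Condition (K).
   Context: A graph $E=(E^0,E^1,r,s)$ consists of countable sets $E^0$ (vertices) and $E^1$ (edges) and maps $r,s\colon E^1\to E^0$ (range and source). A path is a finite sequence $\mu=e_1\cdots e_n$ ($n\ge1$) of edges with $r(e_i)=s(e_{i+1})$; set $s(\mu)=s(e_1)$, $r(\mu)=r(e_n)$. A return path is a path $\mu=e_1\cdots e_n$ with $s(\mu)=r(\mu)$ and $r(e_i)\neq r(\mu)$ for $i<n$; a vertex $w$ supports $\mu$ if $s(\mu)=w$. $E$ satisfies Condition (K) if no vertex supports precisely one return path. The Cuntz Splice $E_C^v$ of $E$ at a vertex $v$ supporting at least two distinct return paths is the graph with vertex set $E^0\sqcup\{u_1,u_2\}$ and edge set $E^1\sqcup\{f_1,f_2,h_1,h_2,k_1,k_2\}$, where old edges keep their range and source, and $f_1\colon v\to u_1$, $f_2\colon u_1\to v$, $h_1\colon u_1\to u_1$, $h_2\colon u_1\to u_2$, $k_1\colon u_2\to u_1$, $k_2\colon u_2\to u_2$ (notation $e\colon a\to b$ means $s(e)=a$, $r(e)=b$). *)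

theory Defs
  imports "HOL-Library.Countable_Set"
begin

record ('v, 'e) dgraph =
  verts :: "'v set"
  edges :: "'e set"
  rng   :: "'e \<Rightarrow> 'v"
  src   :: "'e \<Rightarrow> 'v"

definition is_graph :: "('v, 'e) dgraph \<Rightarrow> bool" where
  "is_graph E \<longleftrightarrow> countable (verts E) \<and> countable (edges E)
     \<and> (\<forall>e \<in> edges E. rng E e \<in> verts E \<and> src E e \<in> verts E)"

definition is_path :: "('v, 'e) dgraph \<Rightarrow> 'e list \<Rightarrow> bool" where
  "is_path E \<mu> \<longleftrightarrow> \<mu> \<noteq> [] \<and> set \<mu> \<subseteq> edges E
     \<and> (\<forall>i. Suc i < length \<mu> \<longrightarrow> rng E (\<mu> ! i) = src E (\<mu> ! Suc i))"

definition path_src :: "('v, 'e) dgraph \<Rightarrow> 'e list \<Rightarrow> 'v" where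
  "path_src E \<mu> = src E (hd \<mu>)"

definition path_rng :: "('v, 'e) dgraph \<Rightarrow> 'e list \<Rightarrow> 'v" where
  "path_rng E \<mu> = rng E (last \<mu>)"

definition is_return_path :: "('v, 'e) dgraph \<Rightarrow> 'e list \<Rightarrow> bool" where
  "is_return_path E \<mu> \<longleftrightarrow> is_path E \<mu> \<and> path_src E \<mu> = path_rng E \<mu>
     \<and> (\<forall>i. Suc i < length \<mu> \<longrightarrow> rng E (\<mu> ! i) \<noteq> path_rng E \<mu>)"

definition supports :: "('v, 'e) dgraph \<Rightarrow> 'v \<Rightarrow> 'e list \<Rightarrow> bool" where
  "supports E w \<mu> \<longleftrightarrow> is_return_path E \<mu> \<and> path_src E \<mu> = w"

definition condition_K :: "('v, 'e) dgraph \<Rightarrow> bool" where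
  "condition_K E \<longleftrightarrow> (\<forall>w \<in> verts E. \<not> (\<exists>!\<mu>. supports E w \<mu>))"

datatype cs_vert = U1 | U2
datatype cs_edge = F1 | F2 | H1 | H2 | K1 | K2

definition cuntz_splice :: "('v, 'e) dgraph \<Rightarrow> 'v \<Rightarrow> ('v + cs_vert, 'e + cs_edge) dgraph" where
  "cuntz_splice E v = \<lparr>
     verts = Inl ` verts E \<union> {Inr U1, Inr U2},
     edges = Inl ` edges E \<union> Inr ` {F1, F2, H1, H2, K1, K2},
     rng = (\<lambda>x. case x of Inl e \<Rightarrow> Inl (rng E e)
                | Inr F1 \<Rightarrow> Inr U1 | Inr F2 \<Rightarrow> Inl v
                | Inr H1 \<Rightarrow> Inr U1 | Inr H2 \<Rightarrow> Inr U2
                | Inr K1 \<Rightarrow> Inr U1 | Inr K2 \<Rightarrow> Inr U2),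
     src = (\<lambda>x. case x of Inl e \<Rightarrow> Inl (src E e)
                | Inr F1 \<Rightarrow> Inl v | Inr F2 \<Rightarrow> Inr U1
                | Inr H1 \<Rightarrow> Inr U1 | Inr H2 \<Rightarrow> Inr U1
                | Inr K1 \<Rightarrow> Inr U2 | Inr K2 \<Rightarrow> Inr U2) \<rparr>"

end

theory Submission
  imports Defs
begin

text \<open>A vertex of the splice lying on the Cuntz part supports the two return paths through
  \<open>h\<^sub>1\<close> and \<open>h\<^sub>2 k\<^sub>1\<close> (resp. \<open>k\<^sub>2\<close> and \<open>k\<^sub>1 h\<^sub>2\<close>). An old vertex \<open>x\<close> supports the same return paths
  inside \<open>E\<close> as before, plus those that enter the Cuntz part; a return path of the second kind
  passes through \<open>u\<^sub>1\<close> or \<open>u\<^sub>2\<close>, and inserting the loop \<open>h\<^sub>1\<close> or \<open>k\<^sub>2\<close> there gives a longer return path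
  at \<open>x\<close>. The hypothesis that \<open>v\<close> supports two
  return paths only makes the splice well-posed; the argument does not use it.\<close>

lemma not_Ex1_iff: "\<not> (\<exists>!x. P x) \<longleftrightarrow> (\<forall>x. P x \<longrightarrow> (\<exists>y. y \<noteq> x \<and> P y))"
  by (auto simp: Ex1_def)

lemma condition_K_iff:
  "condition_K G \<longleftrightarrow> (\<forall>w \<in> verts G. \<forall>\<mu>. supports G w \<mu> \<longrightarrow> (\<exists>\<nu>. \<nu> \<noteq> \<mu> \<and> supports G w \<nu>))"
  unfolding condition_K_def not_Ex1_iff ..

lemma all_Suc_less_length_iff_butlast:
  "(\<forall>i. Suc i < length xs \<longrightarrow> P (xs ! i)) \<longleftrightarrow> (\<forall>x \<in> set (butlast xs). P x)"
  by (auto simp: all_set_conv_all_nth nth_butlast)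

lemma supports_iff:
  "supports G w \<mu> \<longleftrightarrow> \<mu> \<noteq> [] \<and> set \<mu> \<subseteq> edges G \<and> successively (\<lambda>a b. rng G a = src G b) \<mu>
     \<and> src G (hd \<mu>) = w \<and> rng G (last \<mu>) = w \<and> (\<forall>e \<in> set (butlast \<mu>). rng G e \<noteq> w)"
  unfolding supports_def is_return_path_def is_path_def path_src_def path_rng_def
    successively_conv_nth all_Suc_less_length_iff_butlast[symmetric] by auto

lemma supports_insert_loop:
  assumes "supports G w (xs @ ys)" and "xs \<noteq> []"
    and "l \<in> edges G" and "src G l = rng G (last xs)" and "rng G l = rng G (last xs)"
    and "rng G (last xs) \<noteq> w"
  shows "supports G w (xs @ l # ys)"
proof -
  have "ys \<noteq> []"
    using assms(1,2,6) by (auto simp: supports_iff)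
  then have "butlast (xs @ ys) = xs @ butlast ys" "butlast (xs @ l # ys) = xs @ l # butlast ys"
    by (simp_all add: butlast_append)
  with assms \<open>ys \<noteq> []\<close> show ?thesis
    by (auto simp: supports_iff successively_append_iff successively_Cons)
qed

context
  fixes E :: "('v, 'e) dgraph" and v :: 'v
begin

lemma cuntz_splice_simps [simp]:
  "rng (cuntz_splice E v) (Inl e) = Inl (rng E e)"
  "src (cuntz_splice E v) (Inl e) = Inl (src E e)"
  "Inl e \<in> edges (cuntz_splice E v) \<longleftrightarrow> e \<in> edges E"
  "Inr k \<in> edges (cuntz_splice E v)"
  "Inl x \<in> verts (cuntz_splice E v) \<longleftrightarrow> x \<in> verts E"
  "rng (cuntz_splice E v) (Inr F1) = Inr U1" "src (cuntz_splice E v) (Inr F1) = Inl v"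
  "rng (cuntz_splice E v) (Inr F2) = Inl v" "src (cuntz_splice E v) (Inr F2) = Inr U1"
  "rng (cuntz_splice E v) (Inr H1) = Inr U1" "src (cuntz_splice E v) (Inr H1) = Inr U1"
  "rng (cuntz_splice E v) (Inr H2) = Inr U2" "src (cuntz_splice E v) (Inr H2) = Inr U1"
  "rng (cuntz_splice E v) (Inr K1) = Inr U1" "src (cuntz_splice E v) (Inr K1) = Inr U2"
  "rng (cuntz_splice E v) (Inr K2) = Inr U2" "src (cuntz_splice E v) (Inr K2) = Inr U2"
  unfolding cuntz_splice_def by (simp_all add: image_iff) (cases k; simp)

lemma cuntz_splice_new_vertex_two_return_paths:
  "\<exists>\<mu> \<nu>. \<mu> \<noteq> \<nu> \<and> supports (cuntz_splice E v) (Inr c) \<mu> \<and> supports (cuntz_splice E v) (Inr c) \<nu>"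
proof (cases c)
  case U1
  have "supports (cuntz_splice E v) (Inr U1) [Inr H1]"
    "supports (cuntz_splice E v) (Inr U1) [Inr H2, Inr K1]"
    by (simp_all add: supports_iff)
  with U1 show ?thesis by blast
next
  case U2
  have "supports (cuntz_splice E v) (Inr U2) [Inr K2]"
    "supports (cuntz_splice E v) (Inr U2) [Inr K1, Inr H2]"
    by (simp_all add: supports_iff)
  with U2 show ?thesis by blast
qed

definition cuntz_loop :: "cs_vert \<Rightarrow> cs_edge" where
  "cuntz_loop c = (case c of U1 \<Rightarrow> H1 | U2 \<Rightarrow> K2)"

lemma cuntz_loop_simps [simp]:
  "src (cuntz_splice E v) (Inr (cuntz_loop c)) = Inr c"
  "rng (cuntz_splice E v) (Inr (cuntz_loop c)) = Inr c"
  by (cases c; simp add: cuntz_loop_def)+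

text \<open>Only \<open>f\<^sub>2\<close> leaves the Cuntz part, and it starts at \<open>u\<^sub>1\<close>, so it cannot be the first edge of a
  return path at an old vertex.\<close>
lemma cuntz_splice_return_path_visits_new_vertex:
  assumes "supports (cuntz_splice E v) (Inl x) \<mu>" and "Inr k \<in> set \<mu>"
  obtains xs ys c where "\<mu> = xs @ ys" "xs \<noteq> []" "rng (cuntz_splice E v) (last xs) = Inr c"
proof -
  obtain as bs where \<mu>: "\<mu> = as @ Inr k # bs"
    using assms(2) by (meson split_list)
  show thesis
  proof (cases "k = F2")
    case False
    then obtain c where "rng (cuntz_splice E v) (Inr k) = Inr c"
      by (cases k) auto
    with \<mu> show thesis
      by (intro that[of "as @ [Inr k]" bs c]) simp_all
  next
    case True
    with assms(1) \<mu> have "as \<noteq> []"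
      by (auto simp: supports_iff)
    with assms(1) \<mu> True have "rng (cuntz_splice E v) (last as) = Inr U1"
      by (auto simp: supports_iff successively_append_iff)
    with \<mu> \<open>as \<noteq> []\<close> show thesis
      by (intro that[of as "Inr k # bs" U1]) simp_all
  qed
qed

lemma supports_cuntz_splice_map_Inl_iff:
  "supports (cuntz_splice E v) (Inl x) (map Inl \<mu>) \<longleftrightarrow> supports E x \<mu>"
  unfolding supports_iff
  by (cases "\<mu> = []") (auto simp: successively_map hd_map last_map map_butlast[symmetric])

lemma cuntz_splice_old_vertex_another_return_path:
  assumes "condition_K E" and "x \<in> verts E" and "supports (cuntz_splice E v) (Inl x) \<mu>"
  shows "\<exists>\<nu>. \<nu> \<noteq> \<mu> \<and> supports (cuntz_splice E v) (Inl x) \<nu>"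
proof (cases "\<exists>k. Inr k \<in> set \<mu>")
  case True
  then obtain xs ys c where \<mu>: "\<mu> = xs @ ys" "xs \<noteq> []" "rng (cuntz_splice E v) (last xs) = Inr c"
    using cuntz_splice_return_path_visits_new_vertex[OF assms(3)] by blast
  then have "supports (cuntz_splice E v) (Inl x) (xs @ Inr (cuntz_loop c) # ys)"
    using assms(3) by (intro supports_insert_loop) simp_all
  moreover have "xs @ Inr (cuntz_loop c) # ys \<noteq> \<mu>"
    using \<mu> by (auto dest: arg_cong[of _ _ length])
  ultimately show ?thesis by blast
next
  case False
  then obtain \<mu>\<^sub>0 where \<mu>: "\<mu> = map Inl \<mu>\<^sub>0"
    by (metis ex_map_conv sum.exhaust)
  with assms(3) have "supports E x \<mu>\<^sub>0"
    by (simp add: supports_cuntz_splice_map_Inl_iff)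
  with assms(1,2) obtain \<nu>\<^sub>0 where "\<nu>\<^sub>0 \<noteq> \<mu>\<^sub>0" "supports E x \<nu>\<^sub>0"
    unfolding condition_K_iff by blast
  with \<mu> show ?thesis
    by (intro exI[of _ "map Inl \<nu>\<^sub>0"]) (simp add: supports_cuntz_splice_map_Inl_iff inj_map_eq_map)
qed

end

theorem proposition2p3:
  fixes E :: "('v, 'e) dgraph" and v :: 'v
  assumes "is_graph E"
    and "condition_K E"
    and "v \<in> verts E"
    and "\<exists>\<mu> \<nu>. \<mu> \<noteq> \<nu> \<and> supports E v \<mu> \<and> supports E v \<nu>"
  shows "condition_K (cuntz_splice E v)"
  unfolding condition_K_iff
proof (intro ballI allI impI)
  fix w \<mu> assume w: "w \<in> verts (cuntz_splice E v)" and \<mu>: "supports (cuntz_splice E v) w \<mu>"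
  show "\<exists>\<nu>. \<nu> \<noteq> \<mu> \<and> supports (cuntz_splice E v) w \<nu>"
  proof (cases w)
    case (Inl x)
    with w \<mu> show ?thesis
      using cuntz_splice_old_vertex_another_return_path[OF assms(2)] by simp
  next
    case (Inr c)
    then show ?thesis
      using cuntz_splice_new_vertex_two_return_paths by metis
  qed
qed

end
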